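(* Let $\Bbbk$ be a field, $n\ge 3$, $q\in\Bbbk$ a root of unity such that $q^2$ has order $n$, and $\gamma\in\Bbbk$. In the setting described in the context, the algebra $\mathrm{R}_{\mathcal{B}}(A_\gamma)=H\otimes A_\gamma$ in ${}^H_H\mathbf{YD}(\mathcal{B})$, with $\mathbf{y}:=y\otimes 1_A$ and $\mathbf{u}:=1_H\otimes u$ (where $H$ is written as $\Bbbk[y]/(y^n)$ in this tensor factor) and $\mathbf{1}=1_H\otimes 1_A$, has the $\Bbbk$-algebra presentation $$\Bbbk\langle\mathbf{y},\mathbf{u}\rangle/(\mathbf{y}^n,\ \mathbf{u}\mathbf{y}-q^{-2}\mathbf{y}\mathbf{u}).$$ Its $K$-action is $g\cdot\mathbf{y}=q^{-2}\mathbf{y}$, $g\cdot\mathbf{u}=q^2\mathbf{u}$, and its Yetter–Drinfeld structure is given by $$a^{\mathrm{R}}(x\otimes\mathbf{y})=(1-q^2)\mathbf{y}^2,\quad a^{\mathrm{R}}(x\otimes\mathbf{u})=(1-q^{-4})\mathbf{y}\mathbf{u}+\gamma\mathbf{1},\quad \delta^{\mathrm{R}}(\mathbf{y})=1_H\otimes\mathbf{y}+x\otimes 1_A,\quad \delta^{\mathrm{R}}(\mathbf{u})=1_H\otimes\mathbf{u}.$$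
   Context: $K=\Bbbk\mathbb{Z}_n$ with $\mathbb{Z}_n=\langle g\mid g^n=1\rangle$, quasi-triangular with $\mathcal{R}=\frac1n\sum_{i,j=0}^{n-1}q^{-2ij}g^i\otimes g^j$. $\mathcal{B}=K\text{-}\mathbf{Mod}$ with braiding $\Psi(v\otimes w)=R^{(2)}w\otimes R^{(1)}v$, which for $g\cdot v=q^{2|v|}v$, $g\cdot w=q^{2|w|}w$ equals $q^{2|v||w|}w\otimes v$. $H=\Bbbk[x]/(x^n)$ is a Hopf algebra in $\mathcal{B}$ with $g\cdot x=q^{-2}x$, $\Delta(x^m)=\sum_{i=0}^m\binom{m}{i}_{q^2}x^i\otimes x^{m-i}$ where $\binom{m}{i}_{q^2}=\prod_{j=0}^{i-1}\frac{1-q^{2(i-j)}}{1-q^{2(j+1)}}$, $\varepsilon(x^m)=\delta_{m,0}$, $S(x^m)=(-1)^mq^{2\binom{m}{2}}x^m$. $\mathcal{C}=H\text{-}\mathbf{Mod}(\mathcal{B})$ (left $H$-modules in $\mathcal{B}$, tensor product action via $\Delta$ and $\Psi$). $A_\gamma=\Bbbk[u]$ is the algebra in $\mathcal{C}$ with $g\cdot u=q^2u$ and $x\cdot u=\gamma 1_A$ (action on higher powers determined by the module-algebra condition in $\mathcal{C}$). For an algebra $A$ in $\mathcal{C}$, $\mathrm{R}_{\mathcal{B}}(A)$ is $H\otimes A$ with the tensor product algebra structure in $\mathcal{B}$, product $(m_H\otimes m_A)(\mathrm{Id}_H\otimes\Psi_{A,H}\otimes\mathrm{Id}_A)$, $K$-action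 diagonal, $H$-action $a^{\mathrm{R}}=(m\otimes\mathrm{Id}_A)(\mathrm{Id}_H\otimes\Psi_{A,H})(\mathrm{Id}_H\otimes a_A\otimes S)(\mathrm{Id}_{H\otimes H}\otimes\Psi_{H,A})(m\otimes\Delta\otimes\mathrm{Id}_A)(\mathrm{Id}_H\otimes\Psi_{H,H}\otimes\mathrm{Id}_A)(\Delta\otimes\mathrm{Id}_{H\otimes A})$ and $H$-coaction $\delta^{\mathrm{R}}=\Delta\otimes\mathrm{Id}_A$; it is an algebra in the category ${}^H_H\mathbf{YD}(\mathcal{B})$ of $H$-Yetter–Drinfeld modules in $\mathcal{B}$. *)

theory Defs
  imports Main
begin

text \<open>Vectors in a vector space with basis indexed by type 'b are functions 'b => 'k
  (finitely supported). A linear map is given by its values on basis vectors.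
  Basis of H = k[x]/(x^n): x^i (index i, valid for i < n), degree -i (g acts by q^(-2i)).
  Basis of A_gamma = k[u]: u^b (index b), degree b (g acts by q^(2b)).\<close>

definition kd :: "'a \<Rightarrow> 'a \<Rightarrow> 'k::field" where
  "kd a c = (if a = c then 1 else 0)"

definition bas :: "'a \<Rightarrow> 'a \<Rightarrow> 'k::field" where
  "bas a = (\<lambda>c. if c = a then 1 else 0)"

definition lin_app :: "('b \<Rightarrow> 'c \<Rightarrow> 'k::field) \<Rightarrow> ('b \<Rightarrow> 'k) \<Rightarrow> ('c \<Rightarrow> 'k)" where
  "lin_app L v = (\<lambda>c. \<Sum>b\<in>{b. v b \<noteq> 0}. v b * L b c)"

definition tvec :: "('a \<Rightarrow> 'k::field) \<Rightarrow> ('b \<Rightarrow> 'k) \<Rightarrow> ('a \<times> 'b \<Rightarrow> 'k)" where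
  "tvec v w = (\<lambda>(a, b). v a * w b)"

definition smul :: "'k::field \<Rightarrow> ('a \<Rightarrow> 'k) \<Rightarrow> ('a \<Rightarrow> 'k)" where
  "smul c v = (\<lambda>a. c * v a)"

definition hvec :: "nat \<Rightarrow> nat \<Rightarrow> nat \<Rightarrow> 'k::field" where
  "hvec n i = (\<lambda>k. if k = i \<and> i < n then 1 else 0)"

definition mulH :: "nat \<Rightarrow> nat \<times> nat \<Rightarrow> nat \<Rightarrow> 'k::field" where
  "mulH n = (\<lambda>(i, j). hvec n (i + j))"

definition qbinom :: "'k::field \<Rightarrow> nat \<Rightarrow> nat \<Rightarrow> 'k" where
  "qbinom Q m i = (\<Prod>j<i. (1 - Q ^ (m - j)) / (1 - Q ^ (j + 1)))"

definition dltH :: "'k::field \<Rightarrow> nat \<Rightarrow> nat \<Rightarrow> nat \<times> nat \<Rightarrow> 'k" where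
  "dltH q n m = (\<lambda>(i, j). if m < n \<and> i + j = m then qbinom (q^2) m i else 0)"

definition antipH :: "'k::field \<Rightarrow> nat \<Rightarrow> nat \<Rightarrow> nat \<Rightarrow> 'k" where
  "antipH q n m = (\<lambda>k. if k = m \<and> m < n then (-1) ^ m * q ^ (2 * (m choose 2)) else 0)"

section \<open>Braidings Psi(v \<otimes> w) = q^(2|v||w|) w \<otimes> v\<close>

definition psiHH :: "'k::field \<Rightarrow> nat \<times> nat \<Rightarrow> nat \<times> nat \<Rightarrow> 'k" where
  "psiHH q = (\<lambda>(i, j) (a, c). if a = j \<and> c = i
      then q powi (2 * (- int i) * (- int j)) else 0)"

definition psiHA :: "'k::field \<Rightarrow> nat \<times> nat \<Rightarrow> nat \<times> nat \<Rightarrow> 'k" where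
  "psiHA q = (\<lambda>(i, b) (b', i'). if b' = b \<and> i' = i
      then q powi (2 * (- int i) * int b) else 0)"

definition psiAH :: "'k::field \<Rightarrow> nat \<times> nat \<Rightarrow> nat \<times> nat \<Rightarrow> 'k" where
  "psiAH q = (\<lambda>(b, i) (i', b'). if i' = i \<and> b' = b
      then q powi (2 * int b * (- int i)) else 0)"

text \<open>x . u^m, determined by x . u = gamma 1 and the module-algebra condition in C:
  x.(u u^m) = (x.u) u^m + q^(-2) u (x.u^m), and x.1 = 0.\<close>
primrec xu :: "'k::field \<Rightarrow> 'k \<Rightarrow> nat \<Rightarrow> nat \<Rightarrow> 'k" where
  "xu q \<gamma> 0 = (\<lambda>k. 0)"
| "xu q \<gamma> (Suc m) = (\<lambda>k. \<gamma> * kd k m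
      + q powi (-2) * (case k of 0 \<Rightarrow> 0 | Suc k' \<Rightarrow> xu q \<gamma> m k'))"

primrec actAit :: "'k::field \<Rightarrow> 'k \<Rightarrow> nat \<Rightarrow> nat \<Rightarrow> nat \<Rightarrow> 'k" where
  "actAit q \<gamma> 0 b = bas b"
| "actAit q \<gamma> (Suc i) b = lin_app (xu q \<gamma>) (actAit q \<gamma> i b)"

definition actA :: "'k::field \<Rightarrow> 'k \<Rightarrow> nat \<times> nat \<Rightarrow> nat \<Rightarrow> 'k" where
  "actA q \<gamma> = (\<lambda>(i, b). actAit q \<gamma> i b)"

section \<open>R_B(A_gamma) = H \<otimes> A_gamma, basis (i,b) <-> x^i \<otimes> u^b\<close>

definition Rcar :: "nat \<Rightarrow> (nat \<times> nat \<Rightarrow> 'k::field) set" where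
  "Rcar n = {v. finite {p. v p \<noteq> 0} \<and> (\<forall>i b. v (i, b) \<noteq> 0 \<longrightarrow> i < n)}"

text \<open>Product (m_H \<otimes> m_A)(Id_H \<otimes> Psi_{A,H} \<otimes> Id_A).\<close>
definition mRa :: "'k::field \<Rightarrow> (nat \<times> nat) \<times> (nat \<times> nat) \<Rightarrow> nat \<times> nat \<times> nat \<times> nat \<Rightarrow> 'k" where
  "mRa q = (\<lambda>((i, b), (j, d)) (i', j', b', d'). kd i' i * psiAH q (b, j) (j', b') * kd d' d)"

definition mRb :: "nat \<Rightarrow> nat \<times> nat \<times> nat \<times> nat \<Rightarrow> nat \<times> nat \<Rightarrow> 'k::field" where
  "mRb n = (\<lambda>(i, j, b, d) (k, e). mulH n (i, j) k * kd e (b + d))"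

definition prodR :: "'k::field \<Rightarrow> nat \<Rightarrow> (nat \<times> nat \<Rightarrow> 'k) \<Rightarrow> (nat \<times> nat \<Rightarrow> 'k) \<Rightarrow> (nat \<times> nat \<Rightarrow> 'k)" where
  "prodR q n v w = lin_app (mRb n) (lin_app (mRa q) (tvec v w))"

primrec powR :: "'k::field \<Rightarrow> nat \<Rightarrow> (nat \<times> nat \<Rightarrow> 'k) \<Rightarrow> nat \<Rightarrow> (nat \<times> nat \<Rightarrow> 'k)" where
  "powR q n v 0 = bas (0, 0)"
| "powR q n v (Suc m) = prodR q n v (powR q n v m)"

definition gR :: "'k::field \<Rightarrow> (nat \<times> nat \<Rightarrow> 'k) \<Rightarrow> (nat \<times> nat \<Rightarrow> 'k)" where
  "gR q v = (\<lambda>(i, b). q powi (2 * (int b - int i)) * v (i, b))"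

text \<open>The H-action a^R, as the composite of the seven maps of the context
  (applied right to left), on basis vectors h \<otimes> (x^i \<otimes> u^b).\<close>
definition st1 :: "'k::field \<Rightarrow> nat \<Rightarrow> nat \<times> nat \<times> nat \<Rightarrow> nat \<times> nat \<times> nat \<times> nat \<Rightarrow> 'k" where
  "st1 q n = (\<lambda>(h, i, b) (h1, h2, i', b'). dltH q n h (h1, h2) * kd i' i * kd b' b)"
definition st2 :: "'k::field \<Rightarrow> nat \<times> nat \<times> nat \<times> nat \<Rightarrow> nat \<times> nat \<times> nat \<times> nat \<Rightarrow> 'k" where
  "st2 q = (\<lambda>(h1, h2, i, b) (a1, a2, a3, b'). kd a1 h1 * psiHH q (h2, i) (a2, a3) * kd b' b)"
definition st3 :: "'k::field \<Rightarrow> nat \<Rightarrow> nat \<times> nat \<times> nat \<times> nat \<Rightarrow> nat \<times> nat \<times> nat \<times> nat \<Rightarrow> 'k" where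
  "st3 q n = (\<lambda>(h1, i, h2, b) (c1, c2, c3, b'). mulH n (h1, i) c1 * dltH q n h2 (c2, c3) * kd b' b)"
definition st4 :: "'k::field \<Rightarrow> nat \<times> nat \<times> nat \<times> nat \<Rightarrow> nat \<times> nat \<times> nat \<times> nat \<Rightarrow> 'k" where
  "st4 q = (\<lambda>(c1, c2, c3, b) (d1, d2, b', d3). kd d1 c1 * kd d2 c2 * psiHA q (c3, b) (b', d3))"
definition st5 :: "'k::field \<Rightarrow> nat \<Rightarrow> 'k \<Rightarrow> nat \<times> nat \<times> nat \<times> nat \<Rightarrow> nat \<times> nat \<times> nat \<Rightarrow> 'k" where
  "st5 q n \<gamma> = (\<lambda>(d1, d2, b, d3) (e1, b', e3). kd e1 d1 * actA q \<gamma> (d2, b) b' * antipH q n d3 e3)"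
definition st6 :: "'k::field \<Rightarrow> nat \<times> nat \<times> nat \<Rightarrow> nat \<times> nat \<times> nat \<Rightarrow> 'k" where
  "st6 q = (\<lambda>(e1, b, e3) (f1, f2, b'). kd f1 e1 * psiAH q (b, e3) (f2, b'))"
definition st7 :: "nat \<Rightarrow> nat \<times> nat \<times> nat \<Rightarrow> nat \<times> nat \<Rightarrow> 'k::field" where
  "st7 n = (\<lambda>(f1, f2, b) (g, b'). mulH n (f1, f2) g * kd b' b)"

definition aR :: "'k::field \<Rightarrow> nat \<Rightarrow> 'k \<Rightarrow> nat \<Rightarrow> (nat \<times> nat \<Rightarrow> 'k) \<Rightarrow> (nat \<times> nat \<Rightarrow> 'k)" where
  "aR q n \<gamma> h v = lin_app (st7 n) (lin_app (st6 q) (lin_app (st5 q n \<gamma>)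
     (lin_app (st4 q) (lin_app (st3 q n) (lin_app (st2 q)
       (lin_app (st1 q n) (tvec (hvec n h) v)))))))"

text \<open>Coaction delta^R = Delta \<otimes> Id_A : H \<otimes> A \<rightarrow> H \<otimes> (H \<otimes> A).\<close>
definition deltaR :: "'k::field \<Rightarrow> nat \<Rightarrow> (nat \<times> nat \<Rightarrow> 'k) \<Rightarrow> (nat \<times> nat \<times> nat \<Rightarrow> 'k)" where
  "deltaR q n v = lin_app (\<lambda>(i, b) (h, i', b'). dltH q n i (h, i') * kd b' b) v"

section \<open>k-algebras as rings with a central ring homomorphism from k\<close>

definition central_hom :: "('k::field \<Rightarrow> 'b::ring_1) \<Rightarrow> bool" where
  "central_hom \<phi> \<longleftrightarrow> (\<forall>a c. \<phi> (a + c) = \<phi> a + \<phi> c) \<and> (\<forall>a c. \<phi> (a * c) = \<phi> a * \<phi> c)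
     \<and> \<phi> 1 = 1 \<and> (\<forall>a x. \<phi> a * x = x * \<phi> a)"

definition R_alg_hom :: "'k::field \<Rightarrow> nat \<Rightarrow> ('k \<Rightarrow> 'b::ring_1) \<Rightarrow> ((nat \<times> nat \<Rightarrow> 'k) \<Rightarrow> 'b) \<Rightarrow> bool" where
  "R_alg_hom q n \<phi> f \<longleftrightarrow>
     (\<forall>v\<in>Rcar n. \<forall>w\<in>Rcar n. f (\<lambda>p. v p + w p) = f v + f w)
   \<and> (\<forall>c. \<forall>v\<in>Rcar n. f (smul c v) = \<phi> c * f v)
   \<and> (\<forall>v\<in>Rcar n. \<forall>w\<in>Rcar n. f (prodR q n v w) = f v * f w)
   \<and> f (bas (0, 0)) = 1"

end

theory Submission
  imports Defs
begin

(* In the basis x^i (x) u^b of R_B(A_gamma) the product only involves the braiding of u^b past x^j: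
   (x^i (x) u^b)(x^j (x) u^d) = q^(-2bj) x^(i+j) (x) u^(b+d), which is 0 as soon as i + j >= n.
   So y^i u^b = x^i (x) u^b, y^n = 0 and u y = q^(-2) y u.  If Y, U in a k-algebra satisfy the same
   relations, then U^b Y^j = q^(-2bj) Y^j U^b, so sending x^i (x) u^b to Y^i U^b is multiplicative;
   it is the only algebra map with y -> Y and u -> U because y and u generate.
   The remaining identities are evaluated on the generators, using only Delta(x) = 1 (x) x + x (x) 1,
   S(x) = -x, x.1 = 0 and x.u = gamma. *)

section \<open>Finitely supported vectors and linear maps\<close>

definition fin_supp :: "('a \<Rightarrow> 'k::zero) \<Rightarrow> bool" where
  "fin_supp v \<longleftrightarrow> finite {p. v p \<noteq> 0}"

lemma fin_supp_bas [simp]: "fin_supp (bas a :: 'a \<Rightarrow> 'k::field)"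
proof -
  have "{b. (bas a b :: 'k) \<noteq> 0} = {a}" by (auto simp: bas_def)
  then show ?thesis by (simp add: fin_supp_def)
qed

lemma fin_supp_add [simp]: "fin_supp v \<Longrightarrow> fin_supp w \<Longrightarrow> fin_supp (\<lambda>p. v p + w p :: 'k::field)"
  unfolding fin_supp_def by (rule finite_subset[of _ "{p. v p \<noteq> 0} \<union> {p. w p \<noteq> 0}"]) auto

lemma fin_supp_scale [simp]: "fin_supp v \<Longrightarrow> fin_supp (\<lambda>p. c * v p :: 'k::field)"
  unfolding fin_supp_def by (rule finite_subset[of _ "{p. v p \<noteq> 0}"]) auto

lemma fin_supp_diff [simp]: "fin_supp v \<Longrightarrow> fin_supp w \<Longrightarrow> fin_supp (\<lambda>p. v p - w p :: 'k::field)"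
  unfolding fin_supp_def by (rule finite_subset[of _ "{p. v p \<noteq> 0} \<union> {p. w p \<noteq> 0}"]) auto

lemma fin_supp_sum:
  "finite K \<Longrightarrow> (\<And>k. k \<in> K \<Longrightarrow> fin_supp (f k)) \<Longrightarrow> fin_supp (\<lambda>p. \<Sum>k\<in>K. c k * f k p :: 'k::field)"
proof (induction K rule: finite_induct)
  case (insert x K)
  then show ?case by (simp add: fin_supp_add fin_supp_scale)
qed (simp add: fin_supp_def)

lemma vec_eq_sum_bas:
  assumes "finite S" "{p. v p \<noteq> 0} \<subseteq> S"
  shows "v = (\<lambda>p. \<Sum>a\<in>S. v a * bas a p :: 'k::field)"
proof
  fix p
  have "(\<Sum>a\<in>S. v a * bas a p) = (\<Sum>a\<in>S. if p = a then v a else 0)"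
    by (rule sum.cong) (auto simp: bas_def)
  also have "\<dots> = v p" using assms by (auto simp: sum.delta')
  finally show "v p = (\<Sum>a\<in>S. v a * bas a p)" by simp
qed

lemma lin_app_eq_sum:
  assumes "finite S" "{b. v b \<noteq> 0} \<subseteq> S"
  shows "lin_app L v z = (\<Sum>b\<in>S. v b * L b z)"
  unfolding lin_app_def by (rule sum.mono_neutral_left) (use assms in auto)

lemma lin_app_bas [simp]: "lin_app L (bas a) = L a"
proof -
  have "{b. (bas a b :: 'k::field) \<noteq> 0} = {a}" by (auto simp: bas_def)
  then show ?thesis unfolding lin_app_def by (auto simp: bas_def)
qed

lemma lin_app_zero [simp]: "lin_app L (\<lambda>p. 0) = (\<lambda>z. 0)"
  by (simp add: lin_app_def)

lemma lin_app_scale: "lin_app L (\<lambda>p. c * v p) = (\<lambda>z. c * lin_app L v z)"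
proof (cases "c = 0")
  case False
  then have "{b. c * v b \<noteq> 0} = {b. v b \<noteq> 0}" by auto
  then show ?thesis unfolding lin_app_def by (simp add: sum_distrib_left mult.assoc)
qed (simp add: lin_app_def)

lemma lin_app_add:
  assumes "fin_supp v" "fin_supp w"
  shows "lin_app L (\<lambda>p. v p + w p) = (\<lambda>z. lin_app L v z + lin_app L w z)"
proof
  fix z
  let ?S = "{p. v p \<noteq> 0} \<union> {p. w p \<noteq> 0}"
  have fin: "finite ?S" using assms by (auto simp: fin_supp_def)
  show "lin_app L (\<lambda>p. v p + w p) z = lin_app L v z + lin_app L w z"
    by (subst (1 2 3) lin_app_eq_sum[OF fin]) (auto simp: sum.distrib distrib_right)
qed

lemma lin_app_diff:
  assumes "fin_supp v" "fin_supp w"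
  shows "lin_app L (\<lambda>p. v p - w p) = (\<lambda>z. lin_app L v z - lin_app L w z)"
proof -
  have "lin_app L (\<lambda>p. v p - w p) = lin_app L (\<lambda>p. v p + - 1 * w p)" by simp
  also have "\<dots> = (\<lambda>z. lin_app L v z + - 1 * lin_app L w z)"
    using assms by (simp only: lin_app_add fin_supp_scale lin_app_scale)
  finally show ?thesis by simp
qed

lemma lin_app_sum:
  assumes "finite K" "\<And>k. k \<in> K \<Longrightarrow> fin_supp (f k)"
  shows "lin_app L (\<lambda>p. \<Sum>k\<in>K. c k * f k p) = (\<lambda>z. \<Sum>k\<in>K. c k * lin_app L (f k) z)"
  using assms
proof (induction K rule: finite_induct)
  case (insert x K)
  have "lin_app L (\<lambda>p. \<Sum>k\<in>insert x K. c k * f k p)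
      = lin_app L (\<lambda>p. c x * f x p + (\<Sum>k\<in>K. c k * f k p))"
    using insert.hyps by simp
  also have "\<dots> = (\<lambda>z. c x * lin_app L (f x) z + lin_app L (\<lambda>p. \<Sum>k\<in>K. c k * f k p) z)"
    using insert.prems insert.hyps by (simp add: lin_app_add lin_app_scale fin_supp_sum)
  finally show ?case using insert by simp
qed simp

lemma lin_app_sum_bas:
  "finite K \<Longrightarrow> lin_app L (\<lambda>p. \<Sum>k\<in>K. c k * bas (e k) p) = (\<lambda>z. \<Sum>k\<in>K. c k * L (e k) z)"
  by (simp add: lin_app_sum)

section \<open>The product of R_B(A_gamma) on the monomial basis\<close>

lemma tvec_bas [simp]: "tvec (bas a) (bas b) = bas (a, b)"
  by (auto simp: tvec_def bas_def fun_eq_iff)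

lemma tvec_eq_sum_bas:
  assumes "fin_supp v" "fin_supp w"
  shows "tvec v w = (\<lambda>p. \<Sum>x\<in>{a. v a \<noteq> 0} \<times> {b. w b \<noteq> 0}. (v (fst x) * w (snd x)) * bas x p)"
proof -
  have "finite ({a. v a \<noteq> 0} \<times> {b. w b \<noteq> 0})" using assms by (simp add: fin_supp_def)
  moreover have "{p. tvec v w p \<noteq> 0} \<subseteq> {a. v a \<noteq> 0} \<times> {b. w b \<noteq> 0}" by (auto simp: tvec_def)
  ultimately show ?thesis by (subst vec_eq_sum_bas[of _ "tvec v w"]) (auto simp: tvec_def split_beta)
qed

lemma mRa_bas: "mRa q ((i, b), (j, d)) = (\<lambda>z. q powi (2 * int b * - int j) * bas (i, j, b, d) z)"
  by (auto simp: mRa_def psiAH_def kd_def bas_def fun_eq_iff)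

lemma mRb_bas: "mRb n (i, j, b, d) = (\<lambda>z. (if i + j < n then 1 else 0) * bas (i + j, b + d) z)"
  by (auto simp: mRb_def mulH_def hvec_def kd_def bas_def fun_eq_iff)

lemma prodR_bas:
  "prodR q n (bas (i, b)) (bas (j, d)) =
     (\<lambda>z. (q powi (2 * int b * - int j) * (if i + j < n then 1 else 0)) * bas (i + j, b + d) z)"
  unfolding prodR_def tvec_bas lin_app_bas mRa_bas lin_app_scale mRb_bas by (simp add: mult.assoc)

lemma prodR_bilinear:
  assumes "fin_supp v" "fin_supp w"
  shows "prodR q n v w = (\<lambda>z. \<Sum>x\<in>{a. v a \<noteq> 0} \<times> {b. w b \<noteq> 0}.
           (v (fst x) * w (snd x)) * prodR q n (bas (fst x)) (bas (snd x)) z)"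
proof -
  let ?S = "{a. v a \<noteq> 0} \<times> {b. w b \<noteq> 0}"
  have fin: "finite ?S" using assms by (simp add: fin_supp_def)
  have supp: "fin_supp (mRa q x)" for x
    by (cases x) (auto simp: mRa_bas)
  have "prodR q n v w = lin_app (mRb n) (\<lambda>z. \<Sum>x\<in>?S. (v (fst x) * w (snd x)) * mRa q x z)"
    unfolding prodR_def tvec_eq_sum_bas[OF assms] lin_app_sum_bas[OF fin] ..
  also have "\<dots> = (\<lambda>z. \<Sum>x\<in>?S. (v (fst x) * w (snd x)) * lin_app (mRb n) (mRa q x) z)"
    using fin supp by (rule lin_app_sum)
  finally show ?thesis by (simp add: prodR_def)
qed

lemma powR_Y: "m < n \<Longrightarrow> powR q n (bas (1, 0)) m = bas (m, 0)"
  by (induction m) (auto simp: prodR_bas)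

lemma powR_Y_nilpotent: "0 < n \<Longrightarrow> powR q n (bas (1, 0)) n = (\<lambda>_. 0)"
proof (cases n)
  case (Suc m)
  then have "powR q n (bas (1, 0)) m = bas (m, 0)" by (intro powR_Y) auto
  then show ?thesis using Suc by (simp add: prodR_bas)
qed simp

lemma prodR_U_Y: "1 < n \<Longrightarrow> prodR q n (bas (0, 1)) (bas (1, 0)) = smul (q powi -2) (prodR q n (bas (1, 0)) (bas (0, 1)))"
  by (simp add: prodR_bas smul_def fun_eq_iff)

section \<open>The Yetter-Drinfeld structure on the generators\<close>

lemma gR_Y: "gR q (bas (1, 0)) = smul (q powi -2) (bas (1, 0))"
  by (auto simp: gR_def smul_def bas_def fun_eq_iff)

lemma gR_U: "gR q (bas (0, 1)) = smul (q ^ 2) (bas (0, 1))"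
  by (auto simp: gR_def smul_def bas_def fun_eq_iff)

lemma qbinom_0_right [simp]: "qbinom Q m 0 = 1"
  by (simp add: qbinom_def)

lemma qbinom_1_1: "Q \<noteq> 1 \<Longrightarrow> qbinom Q (Suc 0) (Suc 0) = 1"
  by (simp add: qbinom_def)

lemma deltaR_Y:
  "1 < n \<Longrightarrow> q ^ 2 \<noteq> 1 \<Longrightarrow> deltaR q n (bas (1, 0)) = (\<lambda>p. bas (0, 1, 0) p + bas (1, 0, 0) p)"
  unfolding deltaR_def lin_app_bas by (auto simp: dltH_def kd_def bas_def fun_eq_iff qbinom_1_1)

lemma deltaR_U: "0 < n \<Longrightarrow> deltaR q n (bas (0, 1)) = bas (0, 0, 1)"
  unfolding deltaR_def lin_app_bas by (auto simp: dltH_def kd_def bas_def fun_eq_iff)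

lemma hvec_eq_bas: "i < n \<Longrightarrow> hvec n i = bas i"
  by (auto simp: hvec_def bas_def fun_eq_iff)

lemma st1_x:
  "1 < n \<Longrightarrow> q ^ 2 \<noteq> 1 \<Longrightarrow> st1 q n (Suc 0, i, b) = (\<lambda>p. bas (0, Suc 0, i, b) p + bas (Suc 0, 0, i, b) p)"
  by (auto simp: st1_def dltH_def kd_def bas_def fun_eq_iff qbinom_1_1)

lemma st2_bas: "st2 q (h1, h2, i, b) = (\<lambda>p. q powi (2 * - int h2 * - int i) * bas (h1, i, h2, b) p)"
  by (auto simp: st2_def psiHH_def kd_def bas_def fun_eq_iff)

lemma st3_1:
  "0 < n \<Longrightarrow> st3 q n (h1, i, 0, b) = (\<lambda>p. (if h1 + i < n then 1 else 0) * bas (h1 + i, 0, 0, b) p)"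
  by (auto simp: st3_def mulH_def hvec_def dltH_def kd_def bas_def fun_eq_iff)

lemma st3_x:
  "1 < n \<Longrightarrow> q ^ 2 \<noteq> 1 \<Longrightarrow> st3 q n (h1, i, Suc 0, b) =
     (\<lambda>p. (if h1 + i < n then 1 else 0) * (bas (h1 + i, 0, Suc 0, b) p + bas (h1 + i, Suc 0, 0, b) p))"
  by (auto simp: st3_def mulH_def hvec_def dltH_def kd_def bas_def fun_eq_iff qbinom_1_1)

lemma st4_bas: "st4 q (c1, c2, c3, b) = (\<lambda>p. q powi (2 * - int c3 * int b) * bas (c1, c2, b, c3) p)"
  by (auto simp: st4_def psiHA_def kd_def bas_def fun_eq_iff)

lemma st5_1_1: "0 < n \<Longrightarrow> st5 q n \<gamma> (d1, 0, b, 0) = bas (d1, b, 0)"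
  by (auto simp: st5_def actA_def antipH_def numeral_2_eq_2 kd_def bas_def fun_eq_iff)

lemma st5_1_x: "1 < n \<Longrightarrow> st5 q n \<gamma> (d1, 0, b, Suc 0) = (\<lambda>p. - 1 * bas (d1, b, Suc 0) p)"
  by (auto simp: st5_def actA_def antipH_def numeral_2_eq_2 kd_def bas_def fun_eq_iff)

lemma st5_x_1: "st5 q n \<gamma> (d1, Suc 0, 0, d3) = (\<lambda>p. 0)"
  by (auto simp: st5_def actA_def fun_eq_iff)

lemma st5_x_u: "0 < n \<Longrightarrow> st5 q n \<gamma> (d1, Suc 0, Suc 0, 0) = (\<lambda>p. \<gamma> * bas (d1, 0, 0) p)"
  by (simp add: st5_def actA_def) (auto simp: antipH_def numeral_2_eq_2 kd_def bas_def fun_eq_iff split: nat.split)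

lemma st6_bas: "st6 q (e1, b, e3) = (\<lambda>p. q powi (2 * int b * - int e3) * bas (e1, e3, b) p)"
  by (auto simp: st6_def psiAH_def kd_def bas_def fun_eq_iff)

lemma st7_bas: "st7 n (f1, f2, b) = (\<lambda>p. (if f1 + f2 < n then 1 else 0) * bas (f1 + f2, b) p)"
  by (auto simp: st7_def mulH_def hvec_def kd_def bas_def fun_eq_iff)

lemmas aR_x_simps = aR_def hvec_eq_bas lin_app_add lin_app_diff lin_app_scale
  st1_x st2_bas st3_1 st3_x st4_bas st5_1_1 st5_1_x st5_x_1 st5_x_u st6_bas st7_bas

lemma aR_x_Y:
  assumes "2 < n" "q ^ 2 \<noteq> 1"
  shows "aR q n \<gamma> 1 (bas (1, 0)) = smul (1 - q ^ 2) (powR q n (bas (1, 0)) 2)"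
proof -
  have "aR q n \<gamma> 1 (bas (1, 0)) = (\<lambda>z. bas (2, 0) z - q ^ 2 * bas (2, 0) z)"
    using assms by (simp add: aR_x_simps) (simp add: numeral_2_eq_2)
  moreover have "powR q n (bas (1, 0)) 2 = bas (2, 0)" using assms by (intro powR_Y) auto
  ultimately show ?thesis by (simp add: smul_def fun_eq_iff algebra_simps)
qed

lemma aR_x_U:
  assumes "2 < n" "q ^ 2 \<noteq> 1" "q \<noteq> 0"
  shows "aR q n \<gamma> 1 (bas (0, 1)) =
    (\<lambda>p. (1 - q powi -4) * prodR q n (bas (1, 0)) (bas (0, 1)) p + \<gamma> * bas (0, 0) p)"
proof -
  have "aR q n \<gamma> 1 (bas (0, 1)) = (\<lambda>z. \<gamma> * bas (0, 0) z
          - q powi -2 * (q powi -2 * bas (Suc 0, Suc 0) z) + bas (Suc 0, Suc 0) z)"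
    using assms by (simp add: aR_x_simps)
  moreover have "q powi -4 = q powi -2 * q powi -2"
    using power_int_add[of q "-2" "-2"] assms by simp
  ultimately show ?thesis using assms by (simp add: prodR_bas fun_eq_iff algebra_simps)
qed

section \<open>The universal property of the presentation\<close>

lemma central_hom_zero: "central_hom \<phi> \<Longrightarrow> \<phi> 0 = 0"
  unfolding central_hom_def by (metis add_0 add_cancel_right_right)

lemma central_hom_add: "central_hom \<phi> \<Longrightarrow> \<phi> (a + c) = \<phi> a + \<phi> c"
  unfolding central_hom_def by blast

lemma central_hom_mult: "central_hom \<phi> \<Longrightarrow> \<phi> (a * c) = \<phi> a * \<phi> c"
  unfolding central_hom_def by blast

lemma central_hom_one: "central_hom \<phi> \<Longrightarrow> \<phi> 1 = 1"
  unfolding central_hom_def by blast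

lemma central_hom_commute: "central_hom \<phi> \<Longrightarrow> \<phi> a * x = x * \<phi> a"
  unfolding central_hom_def by blast

lemma central_hom_power: "central_hom \<phi> \<Longrightarrow> \<phi> (a ^ k) = \<phi> a ^ k"
  by (induction k) (auto simp: central_hom_one central_hom_mult)

lemma qcommute_power_right:
  fixes z Y U :: "'b::ring_1"
  assumes z: "\<And>x. z * x = x * z" and UY: "U * Y = z * Y * U"
  shows "U * Y ^ j = z ^ j * Y ^ j * U"
proof (induction j)
  case (Suc j)
  have "U * Y ^ Suc j = (U * Y ^ j) * Y" by (simp only: power_Suc2 mult.assoc)
  also have "\<dots> = z ^ j * Y ^ j * (U * Y)" using Suc by (simp add: mult.assoc)
  also have "\<dots> = z ^ j * (Y ^ j * z) * Y * U"
    using UY by (simp only: mult.assoc)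
  also have "\<dots> = z ^ Suc j * Y ^ Suc j * U"
    using z by (simp only: power_Suc2 mult.assoc)
  finally show ?case .
qed simp

lemma qcommute_powers:
  fixes z Y U :: "'b::ring_1"
  assumes z: "\<And>x. z * x = x * z" and UY: "U * Y = z * Y * U"
  shows "U ^ b * Y ^ j = z ^ (b * j) * Y ^ j * U ^ b"
proof (induction b)
  case (Suc b)
  have "U ^ Suc b * Y ^ j = U * z ^ (b * j) * Y ^ j * U ^ b"
    using Suc by (simp add: mult.assoc)
  also have "\<dots> = z ^ (b * j) * (U * Y ^ j) * U ^ b"
    using power_commuting_commutes[OF z] by (simp add: mult.assoc)
  also have "\<dots> = z ^ (b * j) * z ^ j * Y ^ j * (U * U ^ b)"
    using qcommute_power_right[OF z UY, of j] by (simp add: mult.assoc)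
  also have "\<dots> = z ^ (Suc b * j) * Y ^ j * U ^ Suc b"
    by (simp only: mult_Suc add.commute[of j] power_add power_Suc)
  finally show ?case .
qed simp

definition mon :: "'b::ring_1 \<Rightarrow> 'b \<Rightarrow> nat \<times> nat \<Rightarrow> 'b" where
  "mon Y U p = Y ^ fst p * U ^ snd p"

lemma mon_mult_mon:
  assumes ch: "central_hom \<phi>" and Yn: "Y ^ n = 0" and UY: "U * Y = \<phi> (q powi -2) * Y * U"
  shows "\<phi> (q powi (2 * int b * - int j) * (if i + j < n then 1 else 0)) * mon Y U (i + j, b + d)
     = mon Y U (i, b) * mon Y U (j, d)"
proof -
  let ?z = "\<phi> (q powi -2)"
  have z: "?z * x = x * ?z" for x using central_hom_commute[OF ch] .
  have "mon Y U (i, b) * mon Y U (j, d) = Y ^ i * (U ^ b * Y ^ j) * U ^ d"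
    by (simp add: mon_def mult.assoc)
  also have "\<dots> = (Y ^ i * ?z ^ (b * j)) * Y ^ j * U ^ b * U ^ d"
    by (simp add: qcommute_powers[OF z UY] mult.assoc)
  also have "\<dots> = ?z ^ (b * j) * Y ^ (i + j) * U ^ (b + d)"
    by (simp add: power_commuting_commutes[OF z] power_add mult.assoc)
  finally have prod: "mon Y U (i, b) * mon Y U (j, d) = ?z ^ (b * j) * Y ^ (i + j) * U ^ (b + d)" .
  show ?thesis
  proof (cases "i + j < n")
    case True
    have "q powi (2 * int b * - int j) = q powi (-2 * int (b * j))" by (simp add: algebra_simps)
    also have "\<dots> = (q powi -2) powi int (b * j)" by (rule power_int_mult)
    also have "\<dots> = (q powi -2) ^ (b * j)" by (rule power_int_of_nat)
    finally show ?thesis using True prod by (simp add: central_hom_power[OF ch] mon_def mult.assoc)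
  next
    case False
    then have "Y ^ (i + j) = 0" using Yn by (metis le_add_diff_inverse not_less mult_zero_left power_add)
    then show ?thesis using prod False by (simp add: central_hom_zero[OF ch])
  qed
qed

definition mon_eval :: "('k::field \<Rightarrow> 'b::ring_1) \<Rightarrow> 'b \<Rightarrow> 'b \<Rightarrow> (nat \<times> nat \<Rightarrow> 'k) \<Rightarrow> 'b" where
  "mon_eval \<phi> Y U v = (\<Sum>p\<in>{p. v p \<noteq> 0}. \<phi> (v p) * mon Y U p)"

lemma mon_eval_eq_sum:
  assumes "central_hom \<phi>" "finite S" "{p. v p \<noteq> 0} \<subseteq> S"
  shows "mon_eval \<phi> Y U v = (\<Sum>p\<in>S. \<phi> (v p) * mon Y U p)"
  unfolding mon_eval_def by (rule sum.mono_neutral_left) (use assms in \<open>auto simp: central_hom_zero\<close>)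

lemma mon_eval_bas: "central_hom \<phi> \<Longrightarrow> mon_eval \<phi> Y U (bas a) = mon Y U a"
  by (subst mon_eval_eq_sum[of _ "{a}"]) (auto simp: bas_def central_hom_one)

lemma mon_eval_add:
  assumes ch: "central_hom \<phi>" and "fin_supp v" "fin_supp w"
  shows "mon_eval \<phi> Y U (\<lambda>p. v p + w p) = mon_eval \<phi> Y U v + mon_eval \<phi> Y U w"
proof -
  let ?S = "{p. v p \<noteq> 0} \<union> {p. w p \<noteq> 0}"
  have fin: "finite ?S" using assms by (auto simp: fin_supp_def)
  show ?thesis
    by (subst (1 2 3) mon_eval_eq_sum[OF ch fin])
       (auto simp: central_hom_add[OF ch] distrib_right sum.distrib)
qed

lemma mon_eval_scale:
  assumes ch: "central_hom \<phi>" and "fin_supp v"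
  shows "mon_eval \<phi> Y U (\<lambda>p. c * v p) = \<phi> c * mon_eval \<phi> Y U v"
proof -
  have fin: "finite {p. v p \<noteq> 0}" using assms by (simp add: fin_supp_def)
  show ?thesis
    by (subst (1 2) mon_eval_eq_sum[OF ch fin])
       (auto simp: central_hom_mult[OF ch] sum_distrib_left mult.assoc)
qed

lemma mon_eval_sum:
  assumes ch: "central_hom \<phi>" and "finite K" "\<And>k. k \<in> K \<Longrightarrow> fin_supp (f k)"
  shows "mon_eval \<phi> Y U (\<lambda>p. \<Sum>k\<in>K. c k * f k p) = (\<Sum>k\<in>K. \<phi> (c k) * mon_eval \<phi> Y U (f k))"
  using assms(2,3)
proof (induction K rule: finite_induct)
  case empty
  show ?case by (simp add: mon_eval_def)
next
  case (insert x K)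
  have "mon_eval \<phi> Y U (\<lambda>p. \<Sum>k\<in>insert x K. c k * f k p)
      = mon_eval \<phi> Y U (\<lambda>p. c x * f x p + (\<Sum>k\<in>K. c k * f k p))"
    using insert.hyps by simp
  also have "\<dots> = \<phi> (c x) * mon_eval \<phi> Y U (f x) + mon_eval \<phi> Y U (\<lambda>p. \<Sum>k\<in>K. c k * f k p)"
    using insert by (simp add: mon_eval_add[OF ch] mon_eval_scale[OF ch] fin_supp_sum)
  finally show ?case using insert by simp
qed

lemma mon_eval_prodR:
  assumes ch: "central_hom \<phi>" and Yn: "Y ^ n = 0" and UY: "U * Y = \<phi> (q powi -2) * Y * U"
    and v: "fin_supp v" and w: "fin_supp w"
  shows "mon_eval \<phi> Y U (prodR q n v w) = mon_eval \<phi> Y U v * mon_eval \<phi> Y U w"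
proof -
  let ?S = "{a. v a \<noteq> 0} \<times> {b. w b \<noteq> 0}"
  have fin: "finite ?S" using v w by (simp add: fin_supp_def)
  have on_bas: "mon_eval \<phi> Y U (prodR q n (bas a) (bas c)) = mon Y U a * mon Y U c" for a c
    using mon_mult_mon[OF ch Yn UY]
    by (cases a, cases c) (simp add: prodR_bas mon_eval_scale[OF ch] mon_eval_bas[OF ch])
  have supp: "fin_supp (prodR q n (bas a) (bas c))" for a c
    by (cases a, cases c) (simp add: prodR_bas)
  have "mon_eval \<phi> Y U (prodR q n v w)
      = (\<Sum>x\<in>?S. \<phi> (v (fst x) * w (snd x)) * (mon Y U (fst x) * mon Y U (snd x)))"
    by (simp add: prodR_bilinear[OF v w] mon_eval_sum[OF ch fin] supp on_bas)
  also have "\<dots> = (\<Sum>x\<in>?S. (\<phi> (v (fst x)) * mon Y U (fst x)) * (\<phi> (w (snd x)) * mon Y U (snd x)))"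
    by (simp add: central_hom_mult[OF ch] mult.assoc central_hom_commute[OF ch, of "w _"])
  also have "\<dots> = mon_eval \<phi> Y U v * mon_eval \<phi> Y U w"
    by (simp add: mon_eval_def sum.cartesian_product' sum_product)
  finally show ?thesis .
qed

lemma Rcar_fin_supp: "v \<in> Rcar n \<Longrightarrow> fin_supp v"
  by (simp add: Rcar_def fin_supp_def)

lemma Rcar_sum_bas:
  assumes "finite K" "\<And>k. k \<in> K \<Longrightarrow> fst (e k) < n"
  shows "(\<lambda>p. \<Sum>k\<in>K. c k * bas (e k) p) \<in> Rcar n"
proof -
  have supp: "{p. (\<Sum>k\<in>K. c k * bas (e k) p) \<noteq> 0} \<subseteq> e ` K"
    by (auto simp: bas_def elim: sum.not_neutral_contains_not_neutral split: if_splits)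
  then have "finite {p. (\<Sum>k\<in>K. c k * bas (e k) p) \<noteq> 0}"
    using assms(1) by (rule finite_subset[OF _ finite_imageI])
  moreover have "i < n" if nonzero: "(\<Sum>k\<in>K. c k * bas (e k) (i, b)) \<noteq> 0" for i b
  proof -
    obtain k where "k \<in> K" "e k = (i, b)" using subsetD[OF supp, of "(i, b)"] nonzero by auto
    then show ?thesis using assms(2) by force
  qed
  ultimately show ?thesis unfolding Rcar_def by blast
qed

lemma Rcar_bas: "fst a < n \<Longrightarrow> bas a \<in> Rcar n"
  using Rcar_sum_bas[of "{a}" id n "\<lambda>_. 1"] by simp

lemma R_alg_hom_zero:
  assumes "R_alg_hom q n \<phi> f"
  shows "f (\<lambda>p. 0) = 0"
proof -
  have zero: "(\<lambda>p. 0) \<in> Rcar n" by (simp add: Rcar_def)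
  have add: "\<forall>v\<in>Rcar n. \<forall>w\<in>Rcar n. f (\<lambda>p. v p + w p) = f v + f w"
    using assms by (simp add: R_alg_hom_def)
  have "f (\<lambda>p. 0 + 0) = f (\<lambda>p. 0) + f (\<lambda>p. 0)" by (rule bspec[OF bspec[OF add zero] zero])
  then show ?thesis by simp
qed

lemma R_alg_hom_sum_bas:
  assumes f: "R_alg_hom q n \<phi> f" and "finite K" "\<And>k. k \<in> K \<Longrightarrow> fst (e k) < n"
  shows "f (\<lambda>p. \<Sum>k\<in>K. c k * bas (e k) p) = (\<Sum>k\<in>K. \<phi> (c k) * f (bas (e k)))"
  using assms(2,3)
proof (induction K rule: finite_induct)
  case empty
  show ?case using R_alg_hom_zero[OF f] by simp
next
  case (insert x K)
  have add: "f (\<lambda>p. v p + w p) = f v + f w" if "v \<in> Rcar n" "w \<in> Rcar n" for v w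
    using f that by (simp add: R_alg_hom_def)
  have scale: "f (smul c v) = \<phi> c * f v" if "v \<in> Rcar n" for c v
    using f that by (simp add: R_alg_hom_def)
  have x: "bas (e x) \<in> Rcar n" and cx: "smul (c x) (bas (e x)) \<in> Rcar n"
    using Rcar_sum_bas[of "{x}" e n c] Rcar_bas[of "e x" n] insert.prems by (simp_all add: smul_def)
  have K: "(\<lambda>p. \<Sum>k\<in>K. c k * bas (e k) p) \<in> Rcar n"
    using insert by (intro Rcar_sum_bas) auto
  have "f (\<lambda>p. \<Sum>k\<in>insert x K. c k * bas (e k) p)
      = f (\<lambda>p. smul (c x) (bas (e x)) p + (\<Sum>k\<in>K. c k * bas (e k) p))"
    using insert.hyps by (simp add: smul_def)
  also have "\<dots> = \<phi> (c x) * f (bas (e x)) + f (\<lambda>p. \<Sum>k\<in>K. c k * bas (e k) p)"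
    by (simp add: add[OF cx K] scale[OF x])
  finally show ?case using insert by simp
qed

lemma R_alg_hom_bas:
  assumes f: "R_alg_hom q n \<phi> f" and fY: "f (bas (1, 0)) = Y" and fU: "f (bas (0, 1)) = U"
    and n: "1 < n" and a: "fst a < n"
  shows "f (bas a) = mon Y U a"
proof -
  have mult: "f (prodR q n v w) = f v * f w" if "v \<in> Rcar n" "w \<in> Rcar n" for v w
    using f that by (simp add: R_alg_hom_def)
  have one: "f (bas (0, 0)) = 1" using f by (simp add: R_alg_hom_def)
  have fY_pow: "f (bas (i, 0)) = Y ^ i" if "i < n" for i
    using that
  proof (induction i)
    case (Suc i)
    then have "bas (Suc i, 0) = prodR q n (bas (1, 0)) (bas (i, 0))" by (simp add: prodR_bas)
    then show ?case using mult[OF Rcar_bas Rcar_bas] Suc n fY by simp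
  qed (simp add: one)
  have fU_pow: "f (bas (0, b)) = U ^ b" for b
  proof (induction b)
    case (Suc b)
    have "bas (0, Suc b) = prodR q n (bas (0, 1)) (bas (0, b))" using n by (simp add: prodR_bas)
    then show ?case using mult[OF Rcar_bas Rcar_bas] Suc n fU by simp
  qed (simp add: one)
  obtain i b where ab: "a = (i, b)" by (cases a)
  then have "bas a = prodR q n (bas (i, 0)) (bas (0, b))" using a by (simp add: prodR_bas)
  then show ?thesis using mult[OF Rcar_bas Rcar_bas] fY_pow fU_pow a n ab by (simp add: mon_def)
qed

lemma R_alg_hom_eq_mon_eval:
  assumes f: "R_alg_hom q n \<phi> f" and "f (bas (1, 0)) = Y" "f (bas (0, 1)) = U"
    and n: "1 < n" and v: "v \<in> Rcar n"
  shows "f v = mon_eval \<phi> Y U v"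
proof -
  have fin: "finite {a. v a \<noteq> 0}" and below: "\<And>a. a \<in> {a. v a \<noteq> 0} \<Longrightarrow> fst a < n"
    using v by (auto simp: Rcar_def)
  have "v = (\<lambda>p. \<Sum>a\<in>{a. v a \<noteq> 0}. v a * bas a p)"
    by (rule vec_eq_sum_bas[OF fin]) simp
  then have "f v = f (\<lambda>p. \<Sum>a\<in>{a. v a \<noteq> 0}. v a * bas a p)" by (rule arg_cong)
  also have "\<dots> = (\<Sum>a\<in>{a. v a \<noteq> 0}. \<phi> (v a) * mon Y U a)"
    using R_alg_hom_sum_bas[OF f fin, of id] below R_alg_hom_bas[OF assms(1-4)] by simp
  finally show ?thesis by (simp add: mon_eval_def)
qed

lemma R_alg_hom_mon_eval:
  assumes ch: "central_hom \<phi>" and Yn: "Y ^ n = 0" and UY: "U * Y = \<phi> (q powi -2) * Y * U"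
  shows "R_alg_hom q n \<phi> (mon_eval \<phi> Y U)"
  unfolding R_alg_hom_def smul_def
  using mon_eval_add[OF ch] mon_eval_scale[OF ch] mon_eval_prodR[OF ch Yn UY] mon_eval_bas[OF ch]
  by (simp add: Rcar_fin_supp mon_def)

lemma R_universal_property:
  assumes "1 < n" "central_hom \<phi>" "Y ^ n = 0" "U * Y = \<phi> (q powi -2) * Y * U"
  shows "\<exists>f. R_alg_hom q n \<phi> f \<and> f (bas (1, 0)) = Y \<and> f (bas (0, 1)) = U
      \<and> (\<forall>f'. R_alg_hom q n \<phi> f' \<and> f' (bas (1, 0)) = Y \<and> f' (bas (0, 1)) = U
             \<longrightarrow> (\<forall>v\<in>Rcar n. f' v = f v))"
proof (intro exI conjI allI impI ballI)
  show "R_alg_hom q n \<phi> (mon_eval \<phi> Y U)" by (rule R_alg_hom_mon_eval[OF assms(2-4)])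
  show "mon_eval \<phi> Y U (bas (1, 0)) = Y" "mon_eval \<phi> Y U (bas (0, 1)) = U"
    using assms(2) by (simp_all add: mon_eval_bas mon_def)
  show "f' v = mon_eval \<phi> Y U v"
    if "R_alg_hom q n \<phi> f' \<and> f' (bas (1, 0)) = Y \<and> f' (bas (0, 1)) = U" "v \<in> Rcar n" for f' v
    using R_alg_hom_eq_mon_eval[of q n \<phi> f' Y U v] that assms(1) by simp
qed

theorem lemma6p3:
  fixes q \<gamma> :: "'k::field" and n :: nat
  assumes "n \<ge> 3"
    and "(q ^ 2) ^ n = 1"
    and "\<forall>k. 0 < k \<and> k < n \<longrightarrow> (q ^ 2) ^ k \<noteq> 1"
  defines "Y \<equiv> (bas (1, 0) :: nat \<times> nat \<Rightarrow> 'k)"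
    and "U \<equiv> (bas (0, 1) :: nat \<times> nat \<Rightarrow> 'k)"
    and "I \<equiv> (bas (0, 0) :: nat \<times> nat \<Rightarrow> 'k)"
  shows
    "powR q n Y n = (\<lambda>_. 0)
   \<and> prodR q n U Y = smul (q powi (-2)) (prodR q n Y U)
   \<and> (\<forall>(\<phi> :: 'k \<Rightarrow> 'b::ring_1) Yb Ub.
        central_hom \<phi> \<and> Yb ^ n = 0 \<and> Ub * Yb = \<phi> (q powi (-2)) * Yb * Ub \<longrightarrow>
        (\<exists>f. R_alg_hom q n \<phi> f \<and> f Y = Yb \<and> f U = Ub
           \<and> (\<forall>f'. R_alg_hom q n \<phi> f' \<and> f' Y = Yb \<and> f' U = Ub \<longrightarrow> (\<forall>v\<in>Rcar n. f' v = f v))))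
   \<and> gR q Y = smul (q powi (-2)) Y
   \<and> gR q U = smul (q ^ 2) U
   \<and> aR q n \<gamma> 1 Y = smul (1 - q ^ 2) (powR q n Y 2)
   \<and> aR q n \<gamma> 1 U = (\<lambda>p. (1 - q powi (-4)) * prodR q n Y U p + \<gamma> * I p)
   \<and> deltaR q n Y = (\<lambda>p. bas (0, 1, 0) p + bas (1, 0, 0) p)
   \<and> deltaR q n U = bas (0, 0, 1)"
proof -
  have n: "2 < n" using assms(1) by simp
  have q2: "q ^ 2 \<noteq> 1" using assms(3)[rule_format, of 1] n by simp
  have q0: "q \<noteq> 0" using assms(2) n by (cases "q = 0") (auto simp: power_0_left)
  show ?thesis
    unfolding Y_def U_def I_def
    using n R_universal_property[of n]
    by (intro conjI allI impI powR_Y_nilpotent prodR_U_Y gR_Y gR_U aR_x_Y aR_x_U deltaR_Y deltaR_U q2 q0)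
      auto
qed

end
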